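(* Fix an angle $0<\theta\le\pi/8$ and, for an angle $\alpha$, let $\phi_\alpha=\cos(\alpha)|0\rangle+\sin(\alpha)|1\rangle$. Define $\phi_{0,0}=\phi_{-\theta}$, $\phi_{0,1}=\phi_{\theta}$, $\phi_{1,0}=\phi_{\pi/2-\theta}$, $\phi_{1,1}=\phi_{\pi/2+\theta}$. Consider the bit escrow protocol with the return challenge: an honest Alice picks her bit $b$ and a uniformly random $x\in\{0,1\}$ and sends the qubit $\phi_{b,x}$ to Bob; later Bob is asked to return the deposited qubit, returns some qubit $q$, and Alice measures $q$ in the basis $\{\phi_{0,x},\phi_{1,x}\}$, setting $r_A=err$ (rejecting) unless the outcome is $\phi_{b,x}$. Then this protocol is $\left(\epsilon=O\!\left(\frac{\sqrt{p}}{\sin(2\theta)}\right),\,p\right)$ sealing, i.e., there is an absolute constant $C$ such that for every $p\in[0,1]$ the protocol is $\left(C\sqrt{p}/\sin(2\theta),\,p\right)$ sealing.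
   Context: A bit escrow protocol is $(\epsilon,p)$ sealing if, whenever Alice is honest and deposits a bit $b$ with $\Pr(b=0)=1/2$, for any (arbitrary quantum) strategy Bob uses and any value $c$ Bob learns (computed from the system Bob retains), either $\Pr(c=b)\le\frac12+\epsilon$ or $\Pr(r_A=err)\ge p$, where the probabilities are over $b$ uniform in $\{0,1\}$ and the protocol. Bob's general strategy: he may apply any unitary to the received qubit together with an ancilla, then returns a qubit to Alice and keeps the rest. *)

theory Defs
  imports "HOL-Analysis.Analysis"
begin

definition phi :: "real \<Rightarrow> nat \<Rightarrow> complex" where
  "phi \<alpha> i = (if i = 0 then complex_of_real (cos \<alpha>) else complex_of_real (sin \<alpha>))"

definition phi_bx :: "real \<Rightarrow> bool \<Rightarrow> bool \<Rightarrow> nat \<Rightarrow> complex" where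
  "phi_bx \<theta> b x =
     (if \<not> b \<and> \<not> x then phi (- \<theta>)
      else if \<not> b \<and> x then phi \<theta>
      else if b \<and> \<not> x then phi (pi/2 - \<theta>)
      else phi (pi/2 + \<theta>))"

text \<open>Index set of the joint space C^2 (x) C^d: pairs (qubit index, ancilla index).\<close>
definition jidx :: "nat \<Rightarrow> (nat \<times> nat) set" where
  "jidx d = {..<2} \<times> {..<d}"

text \<open>U (a square matrix on the joint space, entries U row col) is unitary: U^* U = I.\<close>
definition unitary_on :: "nat \<Rightarrow> ((nat \<times> nat) \<Rightarrow> (nat \<times> nat) \<Rightarrow> complex) \<Rightarrow> bool" where
  "unitary_on d U \<longleftrightarrow>
     (\<forall>a\<in>jidx d. \<forall>b\<in>jidx d. (\<Sum>c\<in>jidx d. cnj (U c a) * U c b) = (if a = b then 1 else 0))"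

definition unit_vec :: "nat \<Rightarrow> (nat \<Rightarrow> complex) \<Rightarrow> bool" where
  "unit_vec d v \<longleftrightarrow> (\<Sum>k<d. (cmod (v k))\<^sup>2) = 1"

definition qform :: "nat \<Rightarrow> (nat \<Rightarrow> nat \<Rightarrow> complex) \<Rightarrow> (nat \<Rightarrow> complex) \<Rightarrow> complex" where
  "qform d M v = (\<Sum>k<d. \<Sum>l<d. cnj (v k) * M k l * v l)"

definition psd :: "nat \<Rightarrow> (nat \<Rightarrow> nat \<Rightarrow> complex) \<Rightarrow> bool" where
  "psd d M \<longleftrightarrow> (\<forall>v. qform d M v \<in> \<real> \<and> Re (qform d M v) \<ge> 0)"

text \<open>Two effects E0, E1 of a POVM on Bob's retained system (outcomes c = 0, c = 1,
  plus possibly other outcomes): E0, E1 \<ge> 0 and E0 + E1 \<le> I.\<close>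
definition bob_povm :: "nat \<Rightarrow> (nat \<Rightarrow> nat \<Rightarrow> complex) \<Rightarrow> (nat \<Rightarrow> nat \<Rightarrow> complex) \<Rightarrow> bool" where
  "bob_povm d E0 E1 \<longleftrightarrow> psd d E0 \<and> psd d E1 \<and>
     psd d (\<lambda>k l. (if k = l then 1 else 0) - E0 k l - E1 k l)"

text \<open>Joint state after Bob's unitary U acting on (received qubit q) (x) (ancilla psi).\<close>
definition out_state :: "nat \<Rightarrow> ((nat \<times> nat) \<Rightarrow> (nat \<times> nat) \<Rightarrow> complex) \<Rightarrow> (nat \<Rightarrow> complex)
    \<Rightarrow> (nat \<Rightarrow> complex) \<Rightarrow> nat \<Rightarrow> nat \<Rightarrow> complex" where
  "out_state d U \<psi> q j l = (\<Sum>(i, k)\<in>jidx d. U (j, l) (i, k) * (q i * \<psi> k))"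

text \<open>Probability that Alice, measuring the returned qubit in the basis {phi_{0,x}, phi_{1,x}},
  obtains phi_{b,x} (i.e. accepts), when the deposited state was phi_{b,x}.\<close>
definition accept_prob :: "real \<Rightarrow> nat \<Rightarrow> ((nat \<times> nat) \<Rightarrow> (nat \<times> nat) \<Rightarrow> complex) \<Rightarrow> (nat \<Rightarrow> complex)
    \<Rightarrow> bool \<Rightarrow> bool \<Rightarrow> real" where
  "accept_prob \<theta> d U \<psi> b x =
     (\<Sum>l<d. (cmod (\<Sum>j<2. cnj (phi_bx \<theta> b x j) * out_state d U \<psi> (phi_bx \<theta> b x) j l))\<^sup>2)"

text \<open>Probability that Bob's measurement on his retained system yields outcome with effect E.\<close>
definition bob_prob :: "real \<Rightarrow> nat \<Rightarrow> ((nat \<times> nat) \<Rightarrow> (nat \<times> nat) \<Rightarrow> complex) \<Rightarrow> (nat \<Rightarrow> complex)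
    \<Rightarrow> (nat \<Rightarrow> nat \<Rightarrow> complex) \<Rightarrow> bool \<Rightarrow> bool \<Rightarrow> real" where
  "bob_prob \<theta> d U \<psi> E b x =
     (\<Sum>j<2. Re (qform d E (out_state d U \<psi> (phi_bx \<theta> b x) j)))"

text \<open>Pr(c = b), with b and x uniform and independent.\<close>
definition prob_correct :: "real \<Rightarrow> nat \<Rightarrow> ((nat \<times> nat) \<Rightarrow> (nat \<times> nat) \<Rightarrow> complex) \<Rightarrow> (nat \<Rightarrow> complex)
    \<Rightarrow> (nat \<Rightarrow> nat \<Rightarrow> complex) \<Rightarrow> (nat \<Rightarrow> nat \<Rightarrow> complex) \<Rightarrow> real" where
  "prob_correct \<theta> d U \<psi> E0 E1 =
     (\<Sum>x\<in>UNIV. bob_prob \<theta> d U \<psi> E0 False x + bob_prob \<theta> d U \<psi> E1 True x) / 4"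

text \<open>Pr(r_A = err), with b and x uniform and independent.\<close>
definition prob_err :: "real \<Rightarrow> nat \<Rightarrow> ((nat \<times> nat) \<Rightarrow> (nat \<times> nat) \<Rightarrow> complex) \<Rightarrow> (nat \<Rightarrow> complex) \<Rightarrow> real" where
  "prob_err \<theta> d U \<psi> = (\<Sum>b\<in>UNIV. \<Sum>x\<in>UNIV. 1 - accept_prob \<theta> d U \<psi> b x) / 4"

text \<open>(epsilon, p)-sealing of the bit escrow protocol with the return challenge, against all
  strategies of Bob: any ancilla dimension d, any initial ancilla pure state, any joint unitary,
  any measurement on the retained ancilla.\<close>
definition sealing :: "real \<Rightarrow> real \<Rightarrow> real \<Rightarrow> bool" where
  "sealing \<theta> \<epsilon> p \<longleftrightarrow>
     (\<forall>d U \<psi> E0 E1. 0 < d \<longrightarrow> unitary_on d U \<longrightarrow> unit_vec d \<psi> \<longrightarrow> bob_povm d E0 E1 \<longrightarrow>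
        prob_correct \<theta> d U \<psi> E0 E1 \<le> 1/2 + \<epsilon> \<or> prob_err \<theta> d U \<psi> \<ge> p)"

end

theory Submission
  imports Defs
begin

(* Bob's strategy (ancilla state psi, joint unitary U) sends the deposited state phi_alpha to a state
   whose components along phi_alpha and along the orthogonal phi_(alpha + pi/2) are vectors a(alpha),
   r(alpha) of Bob's system: Alice rejects with probability |r(alpha)|^2, and any effect E of Bob has
   probability <a, E a> + <r, E r>. Both vectors are quadratic in (cos alpha, sin alpha), hence
     a(alpha) = P + cos 2alpha X + sin 2alpha Y,    r(alpha) = Z + cos 2alpha Y - sin 2alpha X.
   With c = cos 2theta, s = sin 2theta, the accepted vectors are P + cX -+ sY for b = 0 and
   P - cX +- sY for b = 1: the pairs have the same spread 2sY, and their midpoints are 2c|X| apart.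
   Differences of the rejected vectors give s|X| = O(sqrt p) and c|Y| = O(sqrt p) when Alice rejects
   with probability at most p, so by the parallelogram law and E0 + E1 <= I Bob guesses b with
   probability at most 1/2 + O(sqrt p / s). *)

section \<open>Norms and expectation values\<close>

lemma sum_lessThan_2: "(\<Sum>j<2. f j) = f 0 + f (1::nat)"
  by (simp add: numeral_2_eq_2)

definition vnorm :: "nat \<Rightarrow> (nat \<Rightarrow> complex) \<Rightarrow> real" where
  "vnorm d v = L2_set (\<lambda>k. cmod (v k)) {..<d}"

lemma vnorm_nonneg: "0 \<le> vnorm d v"
  by (simp add: vnorm_def L2_set_nonneg)

lemma vnorm_power2: "(vnorm d v)\<^sup>2 = (\<Sum>k<d. (cmod (v k))\<^sup>2)"
  by (simp add: vnorm_def L2_set_def sum_nonneg)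

lemma unit_vec_iff_vnorm: "unit_vec d v \<longleftrightarrow> vnorm d v = 1"
  by (simp add: unit_vec_def vnorm_def L2_set_def)

lemma vnorm_add_le: "vnorm d (\<lambda>l. x l + y l) \<le> vnorm d x + vnorm d y"
proof -
  have "vnorm d (\<lambda>l. x l + y l) \<le> L2_set (\<lambda>k. cmod (x k) + cmod (y k)) {..<d}"
    unfolding vnorm_def by (rule L2_set_mono) (auto simp: norm_triangle_ineq)
  also have "\<dots> \<le> vnorm d x + vnorm d y"
    unfolding vnorm_def by (rule L2_set_triangle_ineq)
  finally show ?thesis .
qed

lemma vnorm_diff_le: "vnorm d (\<lambda>l. x l - y l) \<le> vnorm d x + vnorm d y"
  using vnorm_add_le[of d x "\<lambda>l. - y l"] by (simp add: vnorm_def)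

lemma vnorm_scale: "vnorm d (\<lambda>l. of_real r * x l) = \<bar>r\<bar> * vnorm d x"
  by (simp add: vnorm_def norm_mult L2_set_right_distrib)

lemma vnorm_uminus: "vnorm d (\<lambda>l. - x l) = vnorm d x"
  by (simp add: vnorm_def)

lemma vnorm_half: "vnorm d (\<lambda>l. x l / 2) = vnorm d x / 2"
  using vnorm_scale[of d "1/2" x] by simp

lemma vnorm_eq_if_scaled_eq:
  assumes "\<And>l. of_real a * x l = of_real b * y l"
  shows "\<bar>a\<bar> * vnorm d x = \<bar>b\<bar> * vnorm d y"
  using assms by (simp flip: vnorm_scale)

definition sesq :: "nat \<Rightarrow> (nat \<Rightarrow> nat \<Rightarrow> complex) \<Rightarrow> (nat \<Rightarrow> complex) \<Rightarrow> (nat \<Rightarrow> complex) \<Rightarrow> complex" where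
  "sesq d E x y = (\<Sum>k<d. \<Sum>l<d. cnj (x k) * E k l * y l)"

definition expval :: "nat \<Rightarrow> (nat \<Rightarrow> nat \<Rightarrow> complex) \<Rightarrow> (nat \<Rightarrow> complex) \<Rightarrow> real" where
  "expval d E v = Re (qform d E v)"

lemma expval_lincomb:
  "expval d E (\<lambda>l. of_real u * x l + of_real v * y l) =
     u\<^sup>2 * expval d E x + u * v * Re (sesq d E x y + sesq d E y x) + v\<^sup>2 * expval d E y"
proof -
  have "cnj (of_real u * x k + of_real v * y k) * E k l * (of_real u * x l + of_real v * y l)
     = of_real (u\<^sup>2) * (cnj (x k) * E k l * x l)
       + of_real (u * v) * (cnj (x k) * E k l * y l + cnj (y k) * E k l * x l)
       + of_real (v\<^sup>2) * (cnj (y k) * E k l * y l)" for k l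
    by (simp add: algebra_simps power2_eq_square)
  then show ?thesis
    by (simp add: expval_def qform_def sesq_def sum.distrib sum_distrib_left distrib_left)
qed

lemma expval_parallelogram:
  "expval d E (\<lambda>l. x l + y l) + expval d E (\<lambda>l. x l - y l) = 2 * expval d E x + 2 * expval d E y"
  using expval_lincomb[of d E 1 x 1 y] expval_lincomb[of d E 1 x "-1" y] by simp

lemma expval_rotation:
  assumes "c\<^sup>2 + s\<^sup>2 = 1"
  shows "expval d E (\<lambda>l. of_real c * x l - of_real s * y l) + expval d E (\<lambda>l. of_real s * x l + of_real c * y l)
       = expval d E x + expval d E y"
proof -
  have "expval d E (\<lambda>l. of_real c * x l - of_real s * y l) + expval d E (\<lambda>l. of_real s * x l + of_real c * y l)
       = (c\<^sup>2 + s\<^sup>2) * (expval d E x + expval d E y)"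
    using expval_lincomb[of d E c x "-s" y] expval_lincomb[of d E s x c y]
    by (simp add: algebra_simps power2_eq_square)
  with assms show ?thesis by simp
qed

lemma qform_diff: "qform d (\<lambda>k l. M k l - N k l) v = qform d M v - qform d N v"
  by (simp add: qform_def algebra_simps sum_subtractf)

lemma expval_identity: "expval d (\<lambda>k l. if k = l then 1 else 0) v = (vnorm d v)\<^sup>2"
proof -
  have "qform d (\<lambda>k l. if k = l then 1 else 0) v = (\<Sum>k<d. v k * cnj (v k))"
    by (simp add: qform_def if_distrib if_distribR sum.delta mult.commute cong: if_cong)
  also have "\<dots> = of_real ((vnorm d v)\<^sup>2)"
    by (simp add: vnorm_power2 of_real_sum flip: complex_norm_square)
  finally show ?thesis by (simp add: expval_def)
qed

section \<open>Effects\<close>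

definition is_effect :: "nat \<Rightarrow> (nat \<Rightarrow> nat \<Rightarrow> complex) \<Rightarrow> bool" where
  "is_effect d E \<longleftrightarrow> (\<forall>v. 0 \<le> expval d E v \<and> expval d E v \<le> (vnorm d v)\<^sup>2)"

lemma povm_expval_sum_le:
  assumes "bob_povm d E0 E1"
  shows "expval d E0 v + expval d E1 v \<le> (vnorm d v)\<^sup>2"
proof -
  have "0 \<le> expval d (\<lambda>k l. (if k = l then 1 else 0) - E0 k l - E1 k l) v"
    using assms by (simp add: bob_povm_def psd_def expval_def)
  then show ?thesis
    by (simp add: expval_def qform_diff flip: expval_identity)
qed

lemma povm_is_effect:
  assumes "bob_povm d E0 E1"
  shows "is_effect d E0" "is_effect d E1"
proof -
  have nonneg: "0 \<le> expval d E0 v" "0 \<le> expval d E1 v" for v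
    using assms by (simp_all add: bob_povm_def psd_def expval_def)
  with povm_expval_sum_le[OF assms] show "is_effect d E0" "is_effect d E1"
    unfolding is_effect_def by (metis add_increasing add_increasing2 order_trans order_refl)+
qed

lemma le_two_sqrt_mult_if_quadratic_bound:
  fixes S a b :: real
  assumes "0 \<le> a" "0 \<le> b" "\<And>t. t * S \<le> a + t\<^sup>2 * b"
  shows "S \<le> 2 * sqrt a * sqrt b"
proof (cases "b = 0")
  case True
  have "S \<le> 0"
  proof (rule ccontr)
    assume "\<not> S \<le> 0"
    then show False using assms(3)[of "(a + 1) / S"] True by simp
  qed
  moreover have "0 \<le> 2 * sqrt a * sqrt b" using assms by simp
  ultimately show ?thesis by linarith
next
  case False
  with assms have "b > 0" by simp
  have "(S / (2 * b)) * S \<le> a + (S / (2 * b))\<^sup>2 * b" by (rule assms(3))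
  with \<open>b > 0\<close> have "S\<^sup>2 \<le> 4 * a * b" by (simp add: power2_eq_square field_simps)
  then have "sqrt (S\<^sup>2) \<le> sqrt (4 * a * b)" by (rule real_sqrt_le_mono)
  with assms show ?thesis by (simp add: real_sqrt_mult)
qed

lemma effect_cross_term_le:
  assumes "is_effect d E"
  shows "Re (sesq d E x y + sesq d E y x) \<le> 2 * vnorm d x * vnorm d y"
proof -
  let ?S = "Re (sesq d E x y + sesq d E y x)"
  have "t * ?S \<le> (vnorm d x)\<^sup>2 + t\<^sup>2 * (vnorm d y)\<^sup>2" for t
  proof -
    have "0 \<le> expval d E (\<lambda>l. of_real 1 * x l + of_real (- t) * y l)"
      using assms by (simp add: is_effect_def)
    also have "\<dots> = expval d E x - t * ?S + t\<^sup>2 * expval d E y"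
      by (simp only: expval_lincomb) simp
    finally have "t * ?S \<le> expval d E x + t\<^sup>2 * expval d E y" by simp
    also have "\<dots> \<le> (vnorm d x)\<^sup>2 + t\<^sup>2 * (vnorm d y)\<^sup>2"
      using assms by (intro add_mono mult_left_mono) (auto simp: is_effect_def)
    finally show ?thesis .
  qed
  from le_two_sqrt_mult_if_quadratic_bound[OF _ _ this] show ?thesis
    by (simp add: vnorm_nonneg)
qed

lemma effect_expval_add_le:
  assumes "is_effect d E"
  shows "expval d E (\<lambda>l. x l + y l) \<le> expval d E x + 2 * vnorm d x * vnorm d y + (vnorm d y)\<^sup>2"
proof -
  have "expval d E (\<lambda>l. x l + y l) = expval d E x + Re (sesq d E x y + sesq d E y x) + expval d E y"
    using expval_lincomb[of d E 1 x 1 y] by simp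
  moreover have "expval d E y \<le> (vnorm d y)\<^sup>2" using assms by (simp add: is_effect_def)
  ultimately show ?thesis using effect_cross_term_le[OF assms, of x y] by linarith
qed

lemma povm_four_vectors_le:
  assumes povm: "bob_povm d E0 E1"
    and norms: "vnorm d A \<le> 1" "vnorm d B \<le> 1" "vnorm d C \<le> 1" "vnorm d D \<le> 1"
    and gap: "\<And>l. B l - A l = C l - D l"
  shows "expval d E0 A + expval d E0 B + expval d E1 C + expval d E1 D
         \<le> 2 + (vnorm d (\<lambda>l. B l - A l))\<^sup>2 / 2 + 4 * vnorm d (\<lambda>l. A l + B l - C l - D l)"
proof -
  define M where "M = (\<lambda>l. (A l + B l) / 2)"
  define N where "N = (\<lambda>l. (C l + D l) / 2)"
  define H where "H = (\<lambda>l. (B l - A l) / 2)"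
  define G where "G = (\<lambda>l. N l - M l)"
  have split: "A = (\<lambda>l. M l - H l)" "B = (\<lambda>l. M l + H l)"
      "C = (\<lambda>l. N l + H l)" "D = (\<lambda>l. N l - H l)" "N = (\<lambda>l. M l + G l)"
    using gap by (auto simp: fun_eq_iff M_def N_def H_def G_def field_simps) (metis distrib_right)+
  have nM: "vnorm d M \<le> 1"
    using vnorm_add_le[of d A B] norms unfolding M_def vnorm_half by linarith
  have nN: "vnorm d N \<le> 1"
    using vnorm_add_le[of d C D] norms unfolding N_def vnorm_half by linarith
  have nH: "(vnorm d H)\<^sup>2 = (vnorm d (\<lambda>l. B l - A l))\<^sup>2 / 4"
    unfolding H_def vnorm_half by (simp add: power_divide)
  have nG: "vnorm d G = vnorm d (\<lambda>l. A l + B l - C l - D l) / 2"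
  proof -
    have "G = (\<lambda>l. - (A l + B l - C l - D l) / 2)"
      by (auto simp: fun_eq_iff G_def M_def N_def field_simps)
    then have "vnorm d G = vnorm d (\<lambda>l. - (A l + B l - C l - D l)) / 2"
      by (simp only: vnorm_half)
    then show ?thesis by (simp only: vnorm_uminus)
  qed
  have nG2: "vnorm d G \<le> 2"
    using vnorm_diff_le[of d N M] nM nN unfolding G_def by linarith
  have E0: "is_effect d E0" and E1: "is_effect d E1" using povm_is_effect[OF povm] .
  have "expval d E0 A + expval d E0 B = 2 * expval d E0 M + 2 * expval d E0 H"
    using expval_parallelogram[of d E0 M H] split by simp
  moreover have "expval d E1 C + expval d E1 D = 2 * expval d E1 N + 2 * expval d E1 H"
    using expval_parallelogram[of d E1 N H] split by simp
  moreover have "expval d E1 N \<le> expval d E1 M + 4 * vnorm d G"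
  proof -
    have "expval d E1 N \<le> expval d E1 M + 2 * vnorm d M * vnorm d G + (vnorm d G)\<^sup>2"
      using effect_expval_add_le[OF E1, of M G] split(5) by simp
    moreover have "vnorm d M * vnorm d G \<le> vnorm d G" "(vnorm d G)\<^sup>2 \<le> 2 * vnorm d G"
      using mult_right_mono[OF nM vnorm_nonneg] mult_right_mono[OF nG2 vnorm_nonneg]
      by (simp_all add: power2_eq_square)
    ultimately show ?thesis by linarith
  qed
  moreover have "expval d E0 M + expval d E1 M \<le> 1"
    using povm_expval_sum_le[OF povm, of M] nM vnorm_nonneg[of d M]
    by (metis order_trans power_le_one)
  moreover have "expval d E0 H + expval d E1 H \<le> (vnorm d H)\<^sup>2"
    by (rule povm_expval_sum_le[OF povm])
  ultimately show ?thesis using nH nG by linarith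
qed

section \<open>Bob's accepted and rejected vectors\<close>

lemma sin_double_le_cos_double:
  assumes "0 < \<theta>" "\<theta> \<le> pi/8"
  shows "0 < sin (2 * \<theta>)" "sin (2 * \<theta>) \<le> cos (2 * \<theta>)"
proof -
  show "0 < sin (2 * \<theta>)" using assms by (intro sin_gt_zero) auto
  have "sin (2 * \<theta>) \<le> sin (pi/4)" using assms by (intro sin_monotone_2pi_le) auto
  also have "\<dots> = cos (pi/4)" by (simp add: sin_45 cos_45)
  also have "\<dots> \<le> cos (2 * \<theta>)" using assms by (intro cos_monotone_0_pi_le) auto
  finally show "sin (2 * \<theta>) \<le> cos (2 * \<theta>)" .
qed

lemma unitary_on_sum_norm_square:
  assumes "unitary_on d U"
  shows "(\<Sum>a\<in>jidx d. (cmod (\<Sum>b\<in>jidx d. U a b * x b))\<^sup>2) = (\<Sum>b\<in>jidx d. (cmod (x b))\<^sup>2)"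
proof -
  let ?J = "jidx d"
  have orth: "(\<Sum>a\<in>?J. U a b * cnj (U a c)) = (if c = b then 1 else 0)" if "b \<in> ?J" "c \<in> ?J" for b c
    using assms that unfolding unitary_on_def by (simp add: mult.commute)
  have "complex_of_real (\<Sum>a\<in>?J. (cmod (\<Sum>b\<in>?J. U a b * x b))\<^sup>2)
      = (\<Sum>a\<in>?J. (\<Sum>b\<in>?J. U a b * x b) * cnj (\<Sum>c\<in>?J. U a c * x c))"
    by (simp only: of_real_sum complex_norm_square)
  also have "\<dots> = (\<Sum>a\<in>?J. \<Sum>b\<in>?J. \<Sum>c\<in>?J. (x b * cnj (x c)) * (U a b * cnj (U a c)))"
    by (simp add: sum_product algebra_simps)
  also have "\<dots> = (\<Sum>b\<in>?J. \<Sum>c\<in>?J. (x b * cnj (x c)) * (\<Sum>a\<in>?J. U a b * cnj (U a c)))"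
    by (simp only: sum_distrib_left, subst sum.swap, rule sum.cong[OF refl], rule sum.swap)
  also have "\<dots> = (\<Sum>b\<in>?J. \<Sum>c\<in>?J. if c = b then x b * cnj (x c) else 0)"
    by (intro sum.cong refl) (simp add: orth)
  also have "\<dots> = (\<Sum>b\<in>?J. x b * cnj (x b))"
    by (simp add: sum.delta jidx_def)
  also have "\<dots> = complex_of_real (\<Sum>b\<in>?J. (cmod (x b))\<^sup>2)"
    by (simp add: of_real_sum flip: complex_norm_square)
  finally show ?thesis by (simp only: of_real_eq_iff)
qed

definition deposit_angle :: "real \<Rightarrow> bool \<Rightarrow> bool \<Rightarrow> real" where
  "deposit_angle \<theta> b x = (if b then pi/2 else 0) + (if x then \<theta> else - \<theta>)"

lemma phi_bx_deposit_angle: "phi_bx \<theta> b x = phi (deposit_angle \<theta> b x)"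
  by (simp add: phi_bx_def deposit_angle_def)

locale bob_strategy =
  fixes d :: nat and U :: "(nat \<times> nat) \<Rightarrow> (nat \<times> nat) \<Rightarrow> complex" and \<psi> :: "nat \<Rightarrow> complex"
  assumes unitary: "unitary_on d U" and unit: "unit_vec d \<psi>"
begin

definition branch :: "nat \<Rightarrow> nat \<Rightarrow> nat \<Rightarrow> complex" where
  "branch i j l = (\<Sum>k<d. U (j, l) (i, k) * \<psi> k)"

lemma out_state_branch: "out_state d U \<psi> q j l = q 0 * branch 0 j l + q 1 * branch 1 j l"
proof -
  have "out_state d U \<psi> q j l = (\<Sum>i<2. \<Sum>k<d. U (j, l) (i, k) * (q i * \<psi> k))"
    unfolding out_state_def jidx_def by (simp add: sum.cartesian_product)
  then show ?thesis
    by (simp add: branch_def sum_lessThan_2 sum_distrib_left algebra_simps)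
qed

lemma out_state_vnorm:
  "(vnorm d (out_state d U \<psi> q 0))\<^sup>2 + (vnorm d (out_state d U \<psi> q 1))\<^sup>2 = (cmod (q 0))\<^sup>2 + (cmod (q 1))\<^sup>2"
proof -
  let ?x = "\<lambda>(i, k). q i * \<psi> k"
  have "(vnorm d (out_state d U \<psi> q 0))\<^sup>2 + (vnorm d (out_state d U \<psi> q 1))\<^sup>2
      = (\<Sum>j<2. \<Sum>l<d. (cmod (out_state d U \<psi> q j l))\<^sup>2)"
    by (simp add: vnorm_power2 sum_lessThan_2)
  also have "\<dots> = (\<Sum>a\<in>jidx d. (cmod (\<Sum>b\<in>jidx d. U a b * ?x b))\<^sup>2)"
    by (simp add: out_state_def jidx_def sum.cartesian_product split_def)
  also have "\<dots> = (\<Sum>b\<in>jidx d. (cmod (?x b))\<^sup>2)"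
    by (rule unitary_on_sum_norm_square[OF unitary])
  also have "\<dots> = (\<Sum>i<2. \<Sum>k<d. (cmod (q i * \<psi> k))\<^sup>2)"
    by (simp add: jidx_def sum.cartesian_product case_prod_unfold)
  also have "\<dots> = ((cmod (q 0))\<^sup>2 + (cmod (q 1))\<^sup>2) * (vnorm d \<psi>)\<^sup>2"
    by (simp add: sum_lessThan_2 vnorm_power2 norm_mult power_mult_distrib sum_distrib_left distrib_right sum.distrib)
  finally show ?thesis using unit by (simp add: unit_vec_iff_vnorm)
qed

text \<open>The components of the returned qubit along \<open>phi \<alpha>\<close>, which Alice accepts, and along
  \<open>phi (\<alpha> + pi/2)\<close>, which she rejects.\<close>

definition accepted :: "real \<Rightarrow> nat \<Rightarrow> complex" where
  "accepted \<alpha> l = of_real (cos \<alpha>) * out_state d U \<psi> (phi \<alpha>) 0 l + of_real (sin \<alpha>) * out_state d U \<psi> (phi \<alpha>) 1 l"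

definition rejected :: "real \<Rightarrow> nat \<Rightarrow> complex" where
  "rejected \<alpha> l = of_real (cos \<alpha>) * out_state d U \<psi> (phi \<alpha>) 1 l - of_real (sin \<alpha>) * out_state d U \<psi> (phi \<alpha>) 0 l"

lemma out_state_accepted_rejected:
  "out_state d U \<psi> (phi \<alpha>) 0 = (\<lambda>l. of_real (cos \<alpha>) * accepted \<alpha> l - of_real (sin \<alpha>) * rejected \<alpha> l)"
  "out_state d U \<psi> (phi \<alpha>) 1 = (\<lambda>l. of_real (sin \<alpha>) * accepted \<alpha> l + of_real (cos \<alpha>) * rejected \<alpha> l)"
proof -
  have unit_circle: "(complex_of_real (cos \<alpha>))\<^sup>2 + (complex_of_real (sin \<alpha>))\<^sup>2 = 1"
    by (simp flip: of_real_power of_real_add)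
  show "out_state d U \<psi> (phi \<alpha>) 0 = (\<lambda>l. of_real (cos \<alpha>) * accepted \<alpha> l - of_real (sin \<alpha>) * rejected \<alpha> l)"
    unfolding accepted_def rejected_def fun_eq_iff using unit_circle by algebra
  show "out_state d U \<psi> (phi \<alpha>) 1 = (\<lambda>l. of_real (sin \<alpha>) * accepted \<alpha> l + of_real (cos \<alpha>) * rejected \<alpha> l)"
    unfolding accepted_def rejected_def fun_eq_iff using unit_circle by algebra
qed

lemma expval_accepted_rejected:
  "expval d E (accepted \<alpha>) + expval d E (rejected \<alpha>)
     = expval d E (out_state d U \<psi> (phi \<alpha>) 0) + expval d E (out_state d U \<psi> (phi \<alpha>) 1)"
  unfolding out_state_accepted_rejected by (rule expval_rotation[symmetric]) simp

lemma vnorm_accepted_rejected: "(vnorm d (accepted \<alpha>))\<^sup>2 + (vnorm d (rejected \<alpha>))\<^sup>2 = 1"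
  using expval_accepted_rejected[of "\<lambda>k l. if k = l then 1 else 0" \<alpha>] out_state_vnorm[of "phi \<alpha>"]
  by (simp add: expval_identity phi_def)

lemma vnorm_accepted_le: "vnorm d (accepted \<alpha>) \<le> 1"
proof -
  have "(vnorm d (accepted \<alpha>))\<^sup>2 \<le> 1"
    using vnorm_accepted_rejected[of \<alpha>] zero_le_power2[of "vnorm d (rejected \<alpha>)"] by linarith
  then show ?thesis by (simp add: power_le_one_iff vnorm_nonneg)
qed

lemma reject_prob_eq: "1 - accept_prob \<theta> d U \<psi> b x = (vnorm d (rejected (deposit_angle \<theta> b x)))\<^sup>2"
proof -
  have "accept_prob \<theta> d U \<psi> b x = (vnorm d (accepted (deposit_angle \<theta> b x)))\<^sup>2"
    by (simp add: accept_prob_def vnorm_power2 phi_bx_deposit_angle accepted_def sum_lessThan_2 phi_def)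
  with vnorm_accepted_rejected show ?thesis by (metis add_diff_cancel_left')
qed

lemma bob_prob_eq:
  "bob_prob \<theta> d U \<psi> E b x
     = expval d E (accepted (deposit_angle \<theta> b x)) + expval d E (rejected (deposit_angle \<theta> b x))"
  unfolding bob_prob_def phi_bx_deposit_angle expval_accepted_rejected
  by (simp add: sum_lessThan_2 expval_def)

lemma prob_err_eq:
  "prob_err \<theta> d U \<psi> = (\<Sum>b\<in>UNIV. \<Sum>x\<in>UNIV. (vnorm d (rejected (deposit_angle \<theta> b x)))\<^sup>2) / 4"
  by (simp add: prob_err_def reject_prob_eq)

lemma rejected_vnorm_le:
  assumes "prob_err \<theta> d U \<psi> \<le> p"
  shows "vnorm d (rejected (deposit_angle \<theta> b x)) \<le> 2 * sqrt p"
proof -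
  let ?r = "\<lambda>b x. (vnorm d (rejected (deposit_angle \<theta> b x)))\<^sup>2"
  have "?r b x \<le> (\<Sum>x'\<in>UNIV. ?r b x')" by (rule member_le_sum) auto
  also have "\<dots> \<le> (\<Sum>b'\<in>UNIV. \<Sum>x'\<in>UNIV. ?r b' x')" by (rule member_le_sum) (auto intro: sum_nonneg)
  also have "\<dots> \<le> 4 * p" using assms by (simp add: prob_err_eq)
  finally have "?r b x \<le> 4 * p" .
  then show ?thesis using real_le_rsqrt by (fastforce simp: real_sqrt_mult)
qed

lemma accepted_rejected_double_angle:
  obtains P X Y Z :: "nat \<Rightarrow> complex" where
    "\<And>\<alpha> l. accepted \<alpha> l = P l + of_real (cos (2 * \<alpha>)) * X l + of_real (sin (2 * \<alpha>)) * Y l"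
    "\<And>\<alpha> l. rejected \<alpha> l = Z l + of_real (cos (2 * \<alpha>)) * Y l - of_real (sin (2 * \<alpha>)) * X l"
proof -
  define P where "P l = (branch 0 0 l + branch 1 1 l) / 2" for l
  define X where "X l = (branch 0 0 l - branch 1 1 l) / 2" for l
  define Y where "Y l = (branch 0 1 l + branch 1 0 l) / 2" for l
  define Z where "Z l = (branch 0 1 l - branch 1 0 l) / 2" for l
  have unit_circle: "(complex_of_real (cos \<alpha>))\<^sup>2 + (complex_of_real (sin \<alpha>))\<^sup>2 = 1" for \<alpha>
    by (simp flip: of_real_power of_real_add)
  have "accepted \<alpha> l = P l + of_real (cos (2 * \<alpha>)) * X l + of_real (sin (2 * \<alpha>)) * Y l" for \<alpha> l
    using unit_circle[of \<alpha>]
    unfolding accepted_def out_state_branch P_def X_def Y_def cos_double sin_double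
    by (simp add: phi_def) algebra
  moreover have "rejected \<alpha> l = Z l + of_real (cos (2 * \<alpha>)) * Y l - of_real (sin (2 * \<alpha>)) * X l" for \<alpha> l
    using unit_circle[of \<alpha>]
    unfolding rejected_def out_state_branch Z_def X_def Y_def cos_double sin_double
    by (simp add: phi_def) algebra
  ultimately show thesis by (rule that)
qed

text \<open>In the double-angle form, \<open>accepted\<close> at \<open>-\<theta>, \<theta>, pi/2 - \<theta>, pi/2 + \<theta>\<close> is
  \<open>P + cX - sY, P + cX + sY, P - cX + sY, P - cX - sY\<close> and \<open>rejected\<close> at \<open>-\<theta>, \<theta>, pi/2 + \<theta>\<close> is
  \<open>Z + cY + sX, Z + cY - sX, Z - cY + sX\<close>, where \<open>c = cos (2 * \<theta>)\<close> and \<open>s = sin (2 * \<theta>)\<close>.\<close>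

lemma deposit_relations:
  "accepted \<theta> l - accepted (- \<theta>) l = accepted (pi/2 - \<theta>) l - accepted (pi/2 + \<theta>) l"
  "of_real (cos (2 * \<theta>)) * (accepted \<theta> l - accepted (- \<theta>) l)
     = of_real (sin (2 * \<theta>)) * (rejected (- \<theta>) l - rejected (pi/2 + \<theta>) l)"
  "of_real (sin (2 * \<theta>)) * (accepted (- \<theta>) l + accepted \<theta> l - accepted (pi/2 - \<theta>) l - accepted (pi/2 + \<theta>) l)
     = of_real (2 * cos (2 * \<theta>)) * (rejected (- \<theta>) l - rejected \<theta> l)"
proof -
  obtain P X Y Z where acc: "\<And>\<alpha> l. accepted \<alpha> l = P l + of_real (cos (2 * \<alpha>)) * X l + of_real (sin (2 * \<alpha>)) * Y l"
    and rej: "\<And>\<alpha> l. rejected \<alpha> l = Z l + of_real (cos (2 * \<alpha>)) * Y l - of_real (sin (2 * \<alpha>)) * X l"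
    using accepted_rejected_double_angle by blast
  have trig: "cos (2 * (pi/2 - \<theta>)) = - cos (2 * \<theta>)" "sin (2 * (pi/2 - \<theta>)) = sin (2 * \<theta>)"
    "cos (2 * (pi/2 + \<theta>)) = - cos (2 * \<theta>)" "sin (2 * (pi/2 + \<theta>)) = - sin (2 * \<theta>)"
    by (simp_all add: right_diff_distrib distrib_left cos_diff sin_diff cos_add sin_add)
  show "accepted \<theta> l - accepted (- \<theta>) l = accepted (pi/2 - \<theta>) l - accepted (pi/2 + \<theta>) l"
    "of_real (cos (2 * \<theta>)) * (accepted \<theta> l - accepted (- \<theta>) l)
       = of_real (sin (2 * \<theta>)) * (rejected (- \<theta>) l - rejected (pi/2 + \<theta>) l)"
    "of_real (sin (2 * \<theta>)) * (accepted (- \<theta>) l + accepted \<theta> l - accepted (pi/2 - \<theta>) l - accepted (pi/2 + \<theta>) l)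
       = of_real (2 * cos (2 * \<theta>)) * (rejected (- \<theta>) l - rejected \<theta> l)"
    unfolding acc rej trig by (simp_all add: algebra_simps)
qed

lemma accepted_gaps_le:
  assumes \<theta>: "0 < \<theta>" "\<theta> \<le> pi/8"
    and rej: "vnorm d (rejected (- \<theta>)) \<le> r" "vnorm d (rejected \<theta>) \<le> r" "vnorm d (rejected (pi/2 + \<theta>)) \<le> r"
  shows "vnorm d (\<lambda>l. accepted \<theta> l - accepted (- \<theta>) l) \<le> 2 * r"
    and "sin (2 * \<theta>) * vnorm d (\<lambda>l. accepted (- \<theta>) l + accepted \<theta> l - accepted (pi/2 - \<theta>) l - accepted (pi/2 + \<theta>) l)
           \<le> 4 * r"
proof -
  let ?c = "cos (2 * \<theta>)" and ?s = "sin (2 * \<theta>)"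
  have s: "0 < ?s" "?s \<le> ?c" using sin_double_le_cos_double[OF \<theta>] by auto
  have "\<bar>?c\<bar> * vnorm d (\<lambda>l. accepted \<theta> l - accepted (- \<theta>) l)
      = \<bar>?s\<bar> * vnorm d (\<lambda>l. rejected (- \<theta>) l - rejected (pi/2 + \<theta>) l)"
    by (rule vnorm_eq_if_scaled_eq) (rule deposit_relations(2))
  then have "?c * vnorm d (\<lambda>l. accepted \<theta> l - accepted (- \<theta>) l)
      = ?s * vnorm d (\<lambda>l. rejected (- \<theta>) l - rejected (pi/2 + \<theta>) l)"
    using s by simp
  also have "\<dots> \<le> ?s * (2 * r)"
    using vnorm_diff_le[of d "rejected (- \<theta>)" "rejected (pi/2 + \<theta>)"] rej s
    by (intro mult_left_mono) linarith+
  also have "\<dots> \<le> ?c * (2 * r)"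
    using s rej vnorm_nonneg[of d "rejected \<theta>"] by (intro mult_right_mono) auto
  finally show "vnorm d (\<lambda>l. accepted \<theta> l - accepted (- \<theta>) l) \<le> 2 * r"
    using s by simp
  have "\<bar>?s\<bar> * vnorm d (\<lambda>l. accepted (- \<theta>) l + accepted \<theta> l - accepted (pi/2 - \<theta>) l - accepted (pi/2 + \<theta>) l)
      = \<bar>2 * ?c\<bar> * vnorm d (\<lambda>l. rejected (- \<theta>) l - rejected \<theta> l)"
    by (rule vnorm_eq_if_scaled_eq) (rule deposit_relations(3))
  then have "?s * vnorm d (\<lambda>l. accepted (- \<theta>) l + accepted \<theta> l - accepted (pi/2 - \<theta>) l - accepted (pi/2 + \<theta>) l)
      = 2 * ?c * vnorm d (\<lambda>l. rejected (- \<theta>) l - rejected \<theta> l)"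
    using s by simp
  also have "\<dots> \<le> 2 * 1 * (2 * r)"
    using vnorm_diff_le[of d "rejected (- \<theta>)" "rejected \<theta>"] rej s
    by (intro mult_mono) (simp_all add: vnorm_nonneg)
  finally show "?s * vnorm d (\<lambda>l. accepted (- \<theta>) l + accepted \<theta> l - accepted (pi/2 - \<theta>) l - accepted (pi/2 + \<theta>) l)
      \<le> 4 * r" by simp
qed

lemma prob_correct_le:
  assumes \<theta>: "0 < \<theta>" "\<theta> \<le> pi/8" and povm: "bob_povm d E0 E1"
    and err: "prob_err \<theta> d U \<psi> \<le> p" and p: "0 \<le> p" "p \<le> 1"
  shows "prob_correct \<theta> d U \<psi> E0 E1 \<le> 1/2 + 11 * sqrt p / sin (2 * \<theta>)"
proof -
  define A B C D where "A = accepted (- \<theta>)" "B = accepted \<theta>"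
    "C = accepted (pi/2 - \<theta>)" "D = accepted (pi/2 + \<theta>)"
  define eA eB eC eD where "eA = rejected (- \<theta>)" "eB = rejected \<theta>"
    "eC = rejected (pi/2 - \<theta>)" "eD = rejected (pi/2 + \<theta>)"
  note defs = A_B_C_D_def eA_eB_eC_eD_def
  define q where "q = sqrt p / sin (2 * \<theta>)"
  have s: "0 < sin (2 * \<theta>)" using sin_double_le_cos_double[OF \<theta>] by auto
  have correct: "prob_correct \<theta> d U \<psi> E0 E1 = (expval d E0 A + expval d E0 B + expval d E1 C + expval d E1 D
      + (expval d E0 eA + expval d E0 eB + expval d E1 eC + expval d E1 eD)) / 4"
    by (simp add: prob_correct_def UNIV_bool bob_prob_eq deposit_angle_def defs)
  have rej_small: "vnorm d eA \<le> 2 * sqrt p" "vnorm d eB \<le> 2 * sqrt p" "vnorm d eD \<le> 2 * sqrt p"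
    using rejected_vnorm_le[OF err, of False False] rejected_vnorm_le[OF err, of False True]
      rejected_vnorm_le[OF err, of True True]
    by (simp_all add: deposit_angle_def defs)
  note gaps = accepted_gaps_le[OF \<theta>, of "2 * sqrt p", folded defs, OF rej_small, simplified]
  have "expval d E0 A + expval d E0 B + expval d E1 C + expval d E1 D
      \<le> 2 + (vnorm d (\<lambda>l. B l - A l))\<^sup>2 / 2 + 4 * vnorm d (\<lambda>l. A l + B l - C l - D l)"
    by (rule povm_four_vectors_le[OF povm]) (auto simp: defs vnorm_accepted_le deposit_relations(1))
  moreover have "(vnorm d (\<lambda>l. B l - A l))\<^sup>2 / 2 \<le> 8 * p"
    using power_mono[OF gaps(1) vnorm_nonneg, of 2] p by (simp add: power_mult_distrib)
  moreover have "4 * vnorm d (\<lambda>l. A l + B l - C l - D l) \<le> 32 * q"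
    using gaps(2) s by (simp add: q_def field_simps)
  moreover have "expval d E0 eA + expval d E0 eB + expval d E1 eC + expval d E1 eD \<le> 4 * p"
  proof -
    have eff: "expval d E0 v \<le> (vnorm d v)\<^sup>2" "expval d E1 v \<le> (vnorm d v)\<^sup>2" for v
      using povm_is_effect[OF povm] by (auto simp: is_effect_def)
    have "(vnorm d eA)\<^sup>2 + (vnorm d eB)\<^sup>2 + (vnorm d eC)\<^sup>2 + (vnorm d eD)\<^sup>2 \<le> 4 * p"
      using err by (simp add: prob_err_eq UNIV_bool deposit_angle_def defs)
    then show ?thesis using eff(1)[of eA] eff(1)[of eB] eff(2)[of eC] eff(2)[of eD] by linarith
  qed
  moreover have "p \<le> q"
  proof -
    have "sqrt p * sqrt p \<le> sqrt p * 1"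
      using p by (intro mult_left_mono) auto
    also have "\<dots> \<le> sqrt p / sin (2 * \<theta>)"
      using s p by (simp add: le_divide_eq mult_left_le)
    finally show ?thesis using p by (simp add: q_def)
  qed
  ultimately have "expval d E0 A + expval d E0 B + expval d E1 C + expval d E1 D
      + (expval d E0 eA + expval d E0 eB + expval d E1 eC + expval d E1 eD) \<le> 2 + 44 * q"
    by linarith
  then show ?thesis unfolding correct q_def by simp
qed

end

theorem theorem10:
  shows "\<exists>C::real. \<forall>\<theta> p. 0 < \<theta> \<longrightarrow> \<theta> \<le> pi/8 \<longrightarrow> 0 \<le> p \<longrightarrow> p \<le> 1 \<longrightarrow>
           sealing \<theta> (C * sqrt p / sin (2 * \<theta>)) p"
proof (intro exI allI impI)
  fix \<theta> p :: real
  assume \<theta>: "0 < \<theta>" "\<theta> \<le> pi/8" and p: "0 \<le> p" "p \<le> 1"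
  show "sealing \<theta> (11 * sqrt p / sin (2 * \<theta>)) p"
    unfolding sealing_def
  proof (intro allI impI)
    fix d U \<psi> E0 E1
    assume "0 < d" and strategy: "unitary_on d U" "unit_vec d \<psi>" and povm: "bob_povm d E0 E1"
    interpret bob_strategy d U \<psi> using strategy by unfold_locales
    show "prob_correct \<theta> d U \<psi> E0 E1 \<le> 1/2 + 11 * sqrt p / sin (2 * \<theta>) \<or> p \<le> prob_err \<theta> d U \<psi>"
      using prob_correct_le[OF \<theta> povm _ p] by fastforce
  qed
qed

end
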